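(* Let $s\geq 3$, let $p,q$ be coprime integers with $q>0$ and $p-(4s+7)q\geq 0$, and let $k\in G_{K_s}(p,q)$ satisfy $M=k^q$, $L=k^{-p}$. Let $P$ be a partially ordered set on which $G_{K_s}(p,q)$ acts (on the right) by order-preserving bijections. Suppose $x\in P$ satisfies one of: (1) $xk=x$, and $x$ and $xl$ are comparable in $P$; or (2) $xl=x$, and $x$ and $xk$ are comparable in $P$. Then $xg=x$ for every $g\in G_{K_s}(p,q)$.
   Context: Let $R=c\,l\,c\,l^{-1}c^{-1}l^{-s}c^{-1}l^{-1}c\,l\,c\,l^{s-1}$, $M=c$ and $L=c^{-(2s-2)}\,l\,c\,l^{s}\,c\,l^{s}\,c\,l\,c^{-(2s+9)}$, and $G_{K_s}(p,q)=\langle c,l\mid R,\ M^pL^q\rangle$. For an action we write $xg$ for the image of $x$ under $g$, and $xg_1g_2=(xg_1)g_2$. Two elements $x,y$ of $P$ are comparable if $x<y$, $x=y$ or $x>y$. *)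

theory Defs
  imports "HOL-Algebra.Group" "HOL-Computational_Algebra.Primes"
begin

text \<open>A letter is (generator, inverted?): generator True = c, False = l.\<close>
type_synonym letter = "bool \<times> bool"

definition inv_letter :: "letter \<Rightarrow> letter" where
  "inv_letter a = (fst a, \<not> snd a)"

definition inv_word :: "letter list \<Rightarrow> letter list" where
  "inv_word w = rev (map inv_letter w)"

definition pow_word :: "letter list \<Rightarrow> int \<Rightarrow> letter list" where
  "pow_word w n = (if 0 \<le> n then concat (replicate (nat n) w)
                   else concat (replicate (nat (- n)) (inv_word w)))"

definition wc :: "letter list" where "wc = [(True, False)]"
definition wl :: "letter list" where "wl = [(False, False)]"

definition R_word :: "int \<Rightarrow> letter list" where
  "R_word s = wc @ wl @ wc @ inv_word wl @ inv_word wc @ pow_word wl (- s) @ inv_word wc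
     @ inv_word wl @ wc @ wl @ wc @ pow_word wl (s - 1)"

definition M_word :: "letter list" where "M_word = wc"

definition L_word :: "int \<Rightarrow> letter list" where
  "L_word s = pow_word wc (- (2 * s - 2)) @ wl @ wc @ pow_word wl s @ wc @ pow_word wl s
     @ wc @ wl @ pow_word wc (- (2 * s + 9))"

definition relators :: "int \<Rightarrow> int \<Rightarrow> int \<Rightarrow> letter list set" where
  "relators s p q = {R_word s, pow_word M_word p @ pow_word (L_word s) q}"

inductive word_eqv :: "letter list set \<Rightarrow> letter list \<Rightarrow> letter list \<Rightarrow> bool"
  for rels where
  refl: "word_eqv rels w w"
| sym: "word_eqv rels u v \<Longrightarrow> word_eqv rels v u"
| trans: "word_eqv rels u v \<Longrightarrow> word_eqv rels v w \<Longrightarrow> word_eqv rels u w"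
| cancel: "word_eqv rels (u @ [a, inv_letter a] @ v) (u @ v)"
| relator: "r \<in> rels \<Longrightarrow> word_eqv rels (u @ r @ v) (u @ v)"

definition presented_group :: "letter list set \<Rightarrow> letter list set monoid" where
  "presented_group rels =
     \<lparr> carrier = UNIV // {(u, v). word_eqv rels u v},
       monoid.mult = (\<lambda>A B. {w. \<exists>u\<in>A. \<exists>v\<in>B. word_eqv rels (u @ v) w}),
       monoid.one = {w. word_eqv rels [] w} \<rparr>"

definition word_class :: "letter list set \<Rightarrow> letter list \<Rightarrow> letter list set" where
  "word_class rels w = {v. word_eqv rels w v}"

definition GK :: "int \<Rightarrow> int \<Rightarrow> int \<Rightarrow> letter list set monoid" where
  "GK s p q = presented_group (relators s p q)"

definition gen_c :: "int \<Rightarrow> int \<Rightarrow> int \<Rightarrow> letter list set" where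
  "gen_c s p q = word_class (relators s p q) wc"
definition gen_l :: "int \<Rightarrow> int \<Rightarrow> int \<Rightarrow> letter list set" where
  "gen_l s p q = word_class (relators s p q) wl"
definition elt_M :: "int \<Rightarrow> int \<Rightarrow> int \<Rightarrow> letter list set" where
  "elt_M s p q = word_class (relators s p q) M_word"
definition elt_L :: "int \<Rightarrow> int \<Rightarrow> int \<Rightarrow> letter list set" where
  "elt_L s p q = word_class (relators s p q) (L_word s)"

text \<open>act g x is the image xg; right action: x(gh) = (xg)h.\<close>
definition right_order_action :: "('g, 'm) monoid_scheme \<Rightarrow> ('g \<Rightarrow> 'p::order \<Rightarrow> 'p) \<Rightarrow> bool" where
  "right_order_action G act \<longleftrightarrow>
     (\<forall>g\<in>carrier G. bij (act g) \<and> mono (act g)) \<and>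
     act \<one>\<^bsub>G\<^esub> = id \<and>
     (\<forall>g\<in>carrier G. \<forall>h\<in>carrier G. \<forall>x. act (g \<otimes>\<^bsub>G\<^esub> h) x = act h (act g x))"

definition comparable :: "'p::order \<Rightarrow> 'p \<Rightarrow> bool" where
  "comparable x y \<longleftrightarrow> x < y \<or> x = y \<or> y < x"

end

theory Submission
  imports Defs
begin

(*
  For a point x and a strict order lt on P that is invariant under the
  action, call g "cone preserving" if it maps the cone {y. lt x y} into itself.  Elements
  fixing x, and elements moving x into the cone, are cone preserving, and cone preserving
  elements are closed under products and powers.  In G = G_{K_s}(p,q) put
  W = l c l^s c l^s c l, so that L = c^-(2s-2) W c^-(2s+9).  From M = c = k^q and L = k^-p
  one gets W k^m = 1 with m = p - (4s+7)q >= 0.  If, in either hypothesis of the theorem,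
  the comparable pair were distinct, then for lt = (<) or lt = (>) the elements k, c, l
  would be cone preserving and x l c would lie in the cone; hence x W k^m would lie in the
  cone, contradicting W k^m = 1.  So c and l both fix x, and since they generate G, all of
  G fixes x.
*)

section \<open>Presented groups\<close>

lemma word_eqv_context:
  "word_eqv rels u v \<Longrightarrow> word_eqv rels (a @ u @ b) (a @ v @ b)"
proof (induction rule: word_eqv.induct)
  case (refl w) then show ?case by (rule word_eqv.refl)
next
  case (sym u v) from sym.IH show ?case by (rule word_eqv.sym)
next
  case (trans u v w) from trans.IH show ?case by (rule word_eqv.trans)
next
  case (cancel u x v)
  show ?case
    using word_eqv.cancel[of rels "a @ u" x "v @ b"] by simp
next
  case (relator r u v)
  show ?case
    using word_eqv.relator[OF relator, of "a @ u" "v @ b"] by simp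
qed

lemma word_eqv_append:
  "word_eqv rels u u' \<Longrightarrow> word_eqv rels v v' \<Longrightarrow> word_eqv rels (u @ v) (u' @ v')"
  using word_eqv_context[of rels u u' "[]" v] word_eqv_context[of rels v v' u' "[]"]
  by (auto intro: word_eqv.trans)

lemma word_class_eq_iff: "word_class rels u = word_class rels v \<longleftrightarrow> word_eqv rels u v"
  unfolding word_class_def
  by (auto intro: word_eqv.refl word_eqv.sym word_eqv.trans)

lemma presented_group_carrier:
  "A \<in> carrier (presented_group rels) \<longleftrightarrow> (\<exists>w. A = word_class rels w)"
  unfolding presented_group_def word_class_def quotient_def by auto

lemma word_class_in_carrier [simp]: "word_class rels w \<in> carrier (presented_group rels)"
  unfolding presented_group_carrier by blast

lemma presented_group_one: "\<one>\<^bsub>presented_group rels\<^esub> = word_class rels []"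
  unfolding presented_group_def word_class_def by simp

lemma presented_group_mult:
  "word_class rels u \<otimes>\<^bsub>presented_group rels\<^esub> word_class rels v = word_class rels (u @ v)"
  unfolding presented_group_def word_class_def
  by (auto intro: word_eqv.refl word_eqv.sym word_eqv.trans word_eqv_append)

lemma inv_word_cancel: "word_eqv rels (inv_word w @ w) []"
proof (induction w)
  case Nil then show ?case by (simp add: inv_word_def word_eqv.refl)
next
  case (Cons a w)
  have "inv_word (a # w) @ a # w = inv_word w @ [inv_letter a, inv_letter (inv_letter a)] @ w"
    by (simp add: inv_word_def inv_letter_def)
  moreover have "word_eqv rels (inv_word w @ [inv_letter a, inv_letter (inv_letter a)] @ w)
                   (inv_word w @ w)"
    by (rule word_eqv.cancel)
  ultimately show ?case using Cons by (metis word_eqv.trans)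
qed

lemma group_presented_group: "group (presented_group rels)"
proof (rule groupI)
  fix A assume "A \<in> carrier (presented_group rels)"
  then obtain w where A: "A = word_class rels w" by (auto simp: presented_group_carrier)
  show "\<exists>B\<in>carrier (presented_group rels). B \<otimes>\<^bsub>presented_group rels\<^esub> A = \<one>\<^bsub>presented_group rels\<^esub>"
  proof
    show "word_class rels (inv_word w) \<otimes>\<^bsub>presented_group rels\<^esub> A = \<one>\<^bsub>presented_group rels\<^esub>"
      by (simp add: A presented_group_mult presented_group_one word_class_eq_iff inv_word_cancel)
  qed simp
qed (auto simp: presented_group_carrier presented_group_mult presented_group_one)

lemma presented_group_inv:
  "inv\<^bsub>presented_group rels\<^esub> (word_class rels w) = word_class rels (inv_word w)"
proof -
  interpret group "presented_group rels" by (rule group_presented_group)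
  show ?thesis
    by (rule inv_equality)
       (auto simp: presented_group_mult presented_group_one word_class_eq_iff inv_word_cancel)
qed

lemma presented_group_pow:
  "word_class rels (pow_word w n) = word_class rels w [^]\<^bsub>presented_group rels\<^esub> n"
proof -
  interpret group "presented_group rels" by (rule group_presented_group)
  have replicate: "word_class rels (concat (replicate m v))
                     = word_class rels v [^]\<^bsub>presented_group rels\<^esub> m" for v m
  proof (induction m)
    case (Suc m)
    show ?case
      by (simp only: replicate_Suc concat.simps Suc presented_group_mult[symmetric]
          nat_pow_Suc2[OF word_class_in_carrier])
  qed (simp add: presented_group_one)
  show ?thesis
  proof (cases "n < 0")
    case True
    then have "word_class rels (pow_word w n)
        = (inv\<^bsub>presented_group rels\<^esub> (word_class rels w)) [^]\<^bsub>presented_group rels\<^esub> nat (- n)"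
      by (simp add: pow_word_def replicate presented_group_inv)
    also have "\<dots> = inv\<^bsub>presented_group rels\<^esub> (word_class rels w [^]\<^bsub>presented_group rels\<^esub> nat (- n))"
      by (rule nat_pow_inv) simp
    also have "\<dots> = word_class rels w [^]\<^bsub>presented_group rels\<^esub> n"
      by (simp only: int_pow_def2 True if_True)
    finally show ?thesis .
  next
    case False
    then show ?thesis
      by (simp add: pow_word_def replicate pow_nat)
  qed
qed

lemma presented_group_fixed_by_generators:
  assumes act_one: "act \<one>\<^bsub>presented_group rels\<^esub> = id"
    and act_mult: "\<And>g h y. g \<in> carrier (presented_group rels) \<Longrightarrow> h \<in> carrier (presented_group rels)
                      \<Longrightarrow> act (g \<otimes>\<^bsub>presented_group rels\<^esub> h) y = act h (act g y)"
    and fixed_c: "act (word_class rels wc) x = x"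
    and fixed_l: "act (word_class rels wl) x = x"
  shows "\<forall>g\<in>carrier (presented_group rels). act g x = x"
proof -
  interpret group "presented_group rels" by (rule group_presented_group)
  have letter: "act (word_class rels [a]) x = x" for a
  proof -
    obtain b inverted where a: "a = (b, inverted)" by fastforce
    have generator: "act (word_class rels [(b, False)]) x = x"
      using fixed_c fixed_l by (cases b) (simp_all add: wc_def wl_def)
    show ?thesis
    proof (cases inverted)
      case True
      have "[a] = inv_word [(b, False)]"
        using a True by (simp add: inv_word_def inv_letter_def)
      then have "word_class rels [(b, False)] \<otimes>\<^bsub>presented_group rels\<^esub> word_class rels [a]
                   = \<one>\<^bsub>presented_group rels\<^esub>"
        by (simp add: presented_group_inv[symmetric])
      then have "act (word_class rels [a]) (act (word_class rels [(b, False)]) x) = x"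
        using act_mult[of "word_class rels [(b, False)]" "word_class rels [a]" x] act_one by simp
      then show ?thesis
        using generator by simp
    qed (use a generator in simp)
  qed
  have word: "act (word_class rels w) x = x" for w
  proof (induction w)
    case Nil
    then show ?case using act_one by (simp add: presented_group_one)
  next
    case (Cons a w)
    have "word_class rels (a # w) = word_class rels [a] \<otimes>\<^bsub>presented_group rels\<^esub> word_class rels w"
      by (simp add: presented_group_mult)
    then show ?case
      using act_mult letter Cons.IH by simp
  qed
  show ?thesis
    using word by (auto simp: presented_group_carrier)
qed

section \<open>Right actions and invariant strict orders\<close>

locale right_action = group G for G (structure) +
  fixes act :: "'a \<Rightarrow> 'b \<Rightarrow> 'b"
  assumes act_one: "act \<one> = id"
    and act_mult: "g \<in> carrier G \<Longrightarrow> h \<in> carrier G \<Longrightarrow> act (g \<otimes> h) y = act h (act g y)"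
begin

lemma act_nat_pow_fixed:
  assumes "g \<in> carrier G" and "act g x = x"
  shows "act (g [^] (n::nat)) x = x"
  by (induction n) (simp_all add: act_one act_mult assms)

end

text \<open>For an order-preserving action both (<) and (>) are examples; keeping the relation
  abstract lets one argument serve both directions of comparability.\<close>

locale invariant_strict_order = right_action +
  fixes lt :: "'b \<Rightarrow> 'b \<Rightarrow> bool"
  assumes lt_act: "g \<in> carrier G \<Longrightarrow> lt y z \<Longrightarrow> lt (act g y) (act g z)"
    and lt_trans: "lt y z \<Longrightarrow> lt z w \<Longrightarrow> lt y w"
    and lt_irrefl: "\<not> lt y y"
begin

definition preserves_cone :: "'b \<Rightarrow> 'a \<Rightarrow> bool" where
  "preserves_cone x g \<longleftrightarrow> (\<forall>y. lt x y \<longrightarrow> lt x (act g y))"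

lemma preserves_cone_if_fixed:
  "g \<in> carrier G \<Longrightarrow> act g x = x \<Longrightarrow> preserves_cone x g"
  unfolding preserves_cone_def by (metis lt_act)

lemma preserves_cone_if_raised:
  "g \<in> carrier G \<Longrightarrow> lt x (act g x) \<Longrightarrow> preserves_cone x g"
  unfolding preserves_cone_def by (metis lt_act lt_trans)

lemma preserves_cone_mult:
  "g \<in> carrier G \<Longrightarrow> h \<in> carrier G \<Longrightarrow> preserves_cone x g \<Longrightarrow> preserves_cone x h
    \<Longrightarrow> preserves_cone x (g \<otimes> h)"
  unfolding preserves_cone_def by (simp add: act_mult)

lemma preserves_cone_nat_pow:
  assumes "g \<in> carrier G" and "preserves_cone x g"
  shows "preserves_cone x (g [^] (n::nat))"
proof (induction n)
  case 0
  then show ?case by (simp add: preserves_cone_def act_one)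
next
  case (Suc n)
  then show ?case by (simp add: preserves_cone_mult assms)
qed

lemma raised_mult:
  "g \<in> carrier G \<Longrightarrow> h \<in> carrier G \<Longrightarrow> lt x (act g x) \<Longrightarrow> preserves_cone x h
    \<Longrightarrow> lt x (act (g \<otimes> h) x)"
  unfolding preserves_cone_def by (simp add: act_mult)

lemma raised_nat_pow:
  assumes "g \<in> carrier G" and "lt x (act g x)" and "0 < n"
  shows "lt x (act (g [^] (n::nat)) x)"
proof -
  obtain n' where n: "n = Suc n'" using \<open>0 < n\<close> by (cases n) auto
  show ?thesis
    unfolding n nat_pow_Suc2[OF \<open>g \<in> carrier G\<close>]
    using assms by (simp add: raised_mult preserves_cone_nat_pow preserves_cone_if_raised)
qed

end

text \<open>The core W = l c l^n c l^n c l of the longitude L = c^-(2s-2) W c^-(2s+9).\<close>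

definition longitude_core :: "('a, 'm) monoid_scheme \<Rightarrow> 'a \<Rightarrow> 'a \<Rightarrow> nat \<Rightarrow> 'a" where
  "longitude_core G c l n =
     l \<otimes>\<^bsub>G\<^esub> (c \<otimes>\<^bsub>G\<^esub> (l [^]\<^bsub>G\<^esub> n \<otimes>\<^bsub>G\<^esub> (c \<otimes>\<^bsub>G\<^esub> (l [^]\<^bsub>G\<^esub> n \<otimes>\<^bsub>G\<^esub> (c \<otimes>\<^bsub>G\<^esub> l)))))"

context invariant_strict_order
begin

lemma longitude_relation_contradiction:
  assumes k: "k \<in> carrier G" and l: "l \<in> carrier G" and c: "c = k [^] (n::nat)"
    and cone_k: "preserves_cone x k" and cone_l: "preserves_cone x l"
    and raised: "lt x (act (l \<otimes> c) x)"
    and relation: "longitude_core G c l j \<otimes> k [^] (m::nat) = \<one>"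
  shows False
proof -
  have c_carrier: "c \<in> carrier G" using c k by simp
  have cone_c: "preserves_cone x c" using c k cone_k by (simp add: preserves_cone_nat_pow)
  define tail where "tail = l [^] j \<otimes> (c \<otimes> (l [^] j \<otimes> (c \<otimes> l)))"
  have tail_carrier: "tail \<in> carrier G" using l c_carrier by (simp add: tail_def)
  have cone_tail: "preserves_cone x tail"
    using l c_carrier cone_l cone_c
    by (simp add: tail_def preserves_cone_mult preserves_cone_nat_pow)
  have core: "longitude_core G c l j = (l \<otimes> c) \<otimes> tail"
    using l c_carrier by (simp add: longitude_core_def tail_def m_assoc)
  have "lt x (act ((l \<otimes> c) \<otimes> tail \<otimes> k [^] m) x)"
    using raised l k c_carrier tail_carrier cone_tail cone_k
    by (simp add: raised_mult preserves_cone_nat_pow)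
  then have "lt x x"
    using relation core by (simp add: act_one)
  then show False
    using lt_irrefl by simp
qed

lemma no_strict_move:
  assumes k: "k \<in> carrier G" and l: "l \<in> carrier G"
    and c: "c = k [^] (n::nat)" and n: "0 < n"
    and relation: "longitude_core G c l j \<otimes> k [^] (m::nat) = \<one>"
    and moved: "(act k x = x \<and> lt x (act l x)) \<or> (act l x = x \<and> lt x (act k x))"
  shows False
  using moved
proof
  assume "act k x = x \<and> lt x (act l x)"
  then have cone_k: "preserves_cone x k" and cone_l: "preserves_cone x l"
    and "lt x (act l x)"
    using k l by (auto simp: preserves_cone_if_fixed preserves_cone_if_raised)
  moreover have "lt x (act (l \<otimes> c) x)"
    using \<open>lt x (act l x)\<close> cone_k c k l by (simp add: raised_mult preserves_cone_nat_pow)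
  ultimately show False
    using longitude_relation_contradiction[OF k l c _ _ _ relation] by blast
next
  assume fixed_l: "act l x = x \<and> lt x (act k x)"
  then have cone_k: "preserves_cone x k" and cone_l: "preserves_cone x l"
    using k l by (auto simp: preserves_cone_if_fixed preserves_cone_if_raised)
  have "lt x (act c x)"
    using fixed_l c k n by (simp add: raised_nat_pow)
  then have "lt x (act (l \<otimes> c) x)"
    using fixed_l c k l by (simp add: act_mult)
  then show False
    using longitude_relation_contradiction[OF k l c cone_k cone_l _ relation] by blast
qed

end

locale ordered_right_action = right_action G act
  for G (structure) and act :: "'a \<Rightarrow> 'b::order \<Rightarrow> 'b" +
  assumes act_strict_mono: "g \<in> carrier G \<Longrightarrow> y < z \<Longrightarrow> act g y < act g z"

sublocale ordered_right_action \<subseteq> less: invariant_strict_order G act "(<)"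
  by unfold_locales (auto simp: act_strict_mono)

sublocale ordered_right_action \<subseteq> greater: invariant_strict_order G act "\<lambda>y z. z < y"
  by unfold_locales (auto simp: act_strict_mono)

lemma ordered_right_action_if_right_order_action:
  assumes "group G" and action: "right_order_action G act"
  shows "ordered_right_action G act"
proof -
  interpret group G by (rule assms(1))
  have strict: "act g y < act g z" if g: "g \<in> carrier G" and "y < z" for g y z
  proof -
    have "bij (act g)" "mono (act g)" using action g by (auto simp: right_order_action_def)
    then show ?thesis
      using \<open>y < z\<close> by (metis bij_is_inj inj_eq monoD order.strict_iff_order)
  qed
  show ?thesis
    using action strict
    by unfold_locales (auto simp: right_order_action_def)
qed

lemma (in ordered_right_action) fixed_by_c_and_l:
  assumes k: "k \<in> carrier G" and l: "l \<in> carrier G"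
    and c: "c = k [^] (n::nat)" and n: "0 < n"
    and relation: "longitude_core G c l j \<otimes> k [^] (m::nat) = \<one>"
    and hyp: "(act k x = x \<and> comparable x (act l x)) \<or> (act l x = x \<and> comparable x (act k x))"
  shows "act c x = x \<and> act l x = x"
proof -
  have "act k x = x \<and> act l x = x"
  proof (rule ccontr)
    assume "\<not> (act k x = x \<and> act l x = x)"
    then have "(act k x = x \<and> x < act l x) \<or> (act l x = x \<and> x < act k x)
             \<or> (act k x = x \<and> act l x < x) \<or> (act l x = x \<and> act k x < x)"
      using hyp by (auto simp: comparable_def)
    then show False
      using less.no_strict_move[OF k l c n relation] greater.no_strict_move[OF k l c n relation]
      by blast
  qed
  then show ?thesis
    using c k by (simp add: act_nat_pow_fixed)
qed

section \<open>The longitude relation in G_{K_s}(p,q)\<close>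

text \<open>If c = k^q and k^-p = c^-a W c^-b, then W is the power k^(q(a+b)-p); in particular
  W k^m = 1 for m = p - (a+b)q.\<close>

lemma (in group) longitude_power_relation:
  assumes k: "k \<in> carrier G" and W: "W \<in> carrier G"
    and longitude: "k [^] (- p) = (k [^] q) [^] (- a) \<otimes> (W \<otimes> (k [^] q) [^] (- b))"
    and bound: "(a + b) * q \<le> (p::int)"
  shows "W \<otimes> k [^] nat (p - (a + b) * q) = \<one>"
proof -
  have "k [^] (q * a) \<otimes> k [^] (- p) \<otimes> k [^] (q * b)
      = (k [^] (q * a) \<otimes> k [^] (- (q * a))) \<otimes> W \<otimes> (k [^] (- (q * b)) \<otimes> k [^] (q * b))"
    using k W by (simp add: longitude int_pow_pow m_assoc)
  also have "\<dots> = W"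
    using k W by (simp flip: int_pow_mult)
  finally have "W = k [^] (q * a - p + q * b)"
    using k by (simp flip: int_pow_mult)
  then have "W \<otimes> k [^] (p - (a + b) * q) = k [^] (0::int)"
    using k by (simp flip: int_pow_mult add: algebra_simps)
  then show ?thesis
    using bound by (simp add: pow_nat)
qed

lemma GK_longitude:
  assumes "0 \<le> s"
  shows "elt_L s p q = gen_c s p q [^]\<^bsub>GK s p q\<^esub> (- (2 * s - 2)) \<otimes>\<^bsub>GK s p q\<^esub>
           (longitude_core (GK s p q) (gen_c s p q) (gen_l s p q) (nat s) \<otimes>\<^bsub>GK s p q\<^esub>
            gen_c s p q [^]\<^bsub>GK s p q\<^esub> (- (2 * s + 9)))"
proof -
  interpret group "presented_group (relators s p q)" by (rule group_presented_group)
  have "gen_l s p q [^]\<^bsub>GK s p q\<^esub> s = gen_l s p q [^]\<^bsub>GK s p q\<^esub> nat s"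
    using assms by (simp add: pow_nat)
  then show ?thesis
    unfolding elt_L_def L_word_def GK_def gen_c_def gen_l_def longitude_core_def
    by (simp add: presented_group_mult[symmetric] presented_group_pow m_assoc)
qed

theorem lemma3p3:
  fixes s p q :: int
    and k :: "letter list set"
    and act :: "letter list set \<Rightarrow> 'p::order \<Rightarrow> 'p"
    and x :: 'p
  assumes "s \<ge> 3"
    and "coprime p q"
    and "q > 0"
    and "p - (4 * s + 7) * q \<ge> 0"
    and "k \<in> carrier (GK s p q)"
    and "k [^]\<^bsub>GK s p q\<^esub> q = elt_M s p q"
    and "k [^]\<^bsub>GK s p q\<^esub> (- p) = elt_L s p q"
    and "right_order_action (GK s p q) act"
    and "(act k x = x \<and> comparable x (act (gen_l s p q) x))
         \<or> (act (gen_l s p q) x = x \<and> comparable x (act k x))"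
  shows "\<forall>g\<in>carrier (GK s p q). act g x = x"
proof -
  have group: "group (GK s p q)"
    unfolding GK_def by (rule group_presented_group)
  interpret ordered_right_action "GK s p q" act
    using ordered_right_action_if_right_order_action[OF group assms(8)] .
  define c l where "c = gen_c s p q" and "l = gen_l s p q"
  have carrier: "c \<in> carrier (GK s p q)" "l \<in> carrier (GK s p q)"
    by (simp_all add: c_def l_def gen_c_def gen_l_def GK_def)
  have c_int_power: "k [^]\<^bsub>GK s p q\<^esub> q = c"
    using assms(6) by (simp add: c_def gen_c_def elt_M_def M_word_def)
  then have c_power: "c = k [^]\<^bsub>GK s p q\<^esub> nat q"
    using assms(3) by (simp add: pow_nat)
  have "longitude_core (GK s p q) c l (nat s) \<otimes>\<^bsub>GK s p q\<^esub>
          k [^]\<^bsub>GK s p q\<^esub> nat (p - ((2 * s - 2) + (2 * s + 9)) * q) = \<one>\<^bsub>GK s p q\<^esub>"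
    using assms(1,4,5,7) carrier GK_longitude[of s p q, folded c_def l_def]
    by (intro longitude_power_relation) (simp_all add: c_int_power longitude_core_def algebra_simps)
  then have "act c x = x \<and> act l x = x"
    using fixed_by_c_and_l[OF assms(5) carrier(2) c_power] assms(3,9) by (simp add: l_def)
  then show ?thesis
    using presented_group_fixed_by_generators[of act "relators s p q" x] act_one act_mult
    by (simp add: c_def l_def gen_c_def gen_l_def GK_def)
qed

end
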